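(* Let $(\Omega,\Pi)$ be a set with a possibility measure, let $d\ge1$, and let $X_n$ ($n\ge1$) and $X$ be fuzzy variables on $\Omega$ with values in $\mathbb R^d$. (a) If $X_n\to X$ in measure, then $X_n\to X$ almost surely; if $X_n\to X$ almost surely, then $X_n\to X$ weakly almost surely; if $X_n\to X$ weakly almost surely, then $X_n\to X$ weakly in measure. (b) Suppose each $X_n$ is a compact fuzzy variable and $X\equiv c$ is constant for some $c\in\mathbb R^d$ (so its membership function is the indicator $\mathbf 1_{\{c\}}$). Then $X_n\to X$ in distribution if and only if $X_n\to X$ in measure.
   Context: A fuzzy set in $\Omega$ is a function $\pi:\Omega\to[0,1]$ with $\pi(\omega_0)=1$ for some $\omega_0$; its $\alpha$-cut ($\alpha\in(0,1]$) is $\{\pi\ge\alpha\}$. The possibility measure defined by $\pi$ is $\Pi(B)=\sup_{\omega\in B}\pi(\omega)$ for all $B\subseteq\Omega$ (with $\sup\emptyset=0$). A fuzzy variable with values in $E$ is any map $X:\Omega\to E$; its membership function is the fuzzy set $A_X(y)=\Pi(X^{-1}(y))=\sup\pi(X^{-1}(y))$. $X$ is a compact fuzzy variable if all $\alpha$-cuts of $A_X$, $\alpha\in(0,1]$, are nonempty and compact. $|\cdot|$ is the Euclidean norm. Types of convergence: - almost sure: $\Pi(\{\omega: X_n(\omega)\not\to X(\omega)\})=0$ (the set includes those $\omega$ where the limit does not exist); - weakly almost sure: $\Pi(\{\omega: \lim_n X_n(\omega)=X(\omega)\})=1$; - in measure: for every $\epsilon>0$, $\lim_n\Pi(|X_n-X|\ge\epsilon)=0$;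 - weakly in measure: for every $\epsilon>0$, $\lim_n\Pi(|X_n-X|\le\epsilon)=1$; - in distribution (for compact fuzzy variables): for every $\alpha\in(0,1]$, the $\alpha$-cuts $A_{X_n}^\alpha$ converge to $A_X^\alpha$ in the Hausdorff metric on nonempty compact subsets of $\mathbb R^d$. *)

theory Defs
  imports "HOL-Analysis.Analysis"
begin

definition fuzzy_set :: "('a \<Rightarrow> real) \<Rightarrow> bool" where
  "fuzzy_set \<pi> \<longleftrightarrow> (\<forall>\<omega>. 0 \<le> \<pi> \<omega> \<and> \<pi> \<omega> \<le> 1) \<and> (\<exists>\<omega>0. \<pi> \<omega>0 = 1)"

definition Poss :: "('a \<Rightarrow> real) \<Rightarrow> 'a set \<Rightarrow> real" where
  "Poss \<pi> B = (if B = {} then 0 else (SUP \<omega>\<in>B. \<pi> \<omega>))"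

definition memb :: "('a \<Rightarrow> real) \<Rightarrow> ('a \<Rightarrow> 'b) \<Rightarrow> 'b \<Rightarrow> real" where
  "memb \<pi> X y = Poss \<pi> (X -` {y})"

definition acut :: "('b \<Rightarrow> real) \<Rightarrow> real \<Rightarrow> 'b set" where
  "acut A \<alpha> = {y. A y \<ge> \<alpha>}"

definition compact_fuzzy_var :: "('a \<Rightarrow> real) \<Rightarrow> ('a \<Rightarrow> 'b::euclidean_space) \<Rightarrow> bool" where
  "compact_fuzzy_var \<pi> X \<longleftrightarrow>
     (\<forall>\<alpha>\<in>{0<..1}. acut (memb \<pi> X) \<alpha> \<noteq> {} \<and> compact (acut (memb \<pi> X) \<alpha>))"

definition hausdist :: "'b::metric_space set \<Rightarrow> 'b set \<Rightarrow> real" where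
  "hausdist S T = max (SUP x\<in>S. infdist x T) (SUP y\<in>T. infdist y S)"

definition conv_as :: "('a \<Rightarrow> real) \<Rightarrow> (nat \<Rightarrow> 'a \<Rightarrow> 'b::euclidean_space) \<Rightarrow> ('a \<Rightarrow> 'b) \<Rightarrow> bool" where
  "conv_as \<pi> Xs X \<longleftrightarrow> Poss \<pi> {\<omega>. \<not> ((\<lambda>n. Xs n \<omega>) \<longlonglongrightarrow> X \<omega>)} = 0"

definition conv_weak_as :: "('a \<Rightarrow> real) \<Rightarrow> (nat \<Rightarrow> 'a \<Rightarrow> 'b::euclidean_space) \<Rightarrow> ('a \<Rightarrow> 'b) \<Rightarrow> bool" where
  "conv_weak_as \<pi> Xs X \<longleftrightarrow> Poss \<pi> {\<omega>. (\<lambda>n. Xs n \<omega>) \<longlonglongrightarrow> X \<omega>} = 1"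

definition conv_measure :: "('a \<Rightarrow> real) \<Rightarrow> (nat \<Rightarrow> 'a \<Rightarrow> 'b::euclidean_space) \<Rightarrow> ('a \<Rightarrow> 'b) \<Rightarrow> bool" where
  "conv_measure \<pi> Xs X \<longleftrightarrow>
     (\<forall>\<epsilon>>0. (\<lambda>n. Poss \<pi> {\<omega>. norm (Xs n \<omega> - X \<omega>) \<ge> \<epsilon>}) \<longlonglongrightarrow> 0)"

definition conv_weak_measure :: "('a \<Rightarrow> real) \<Rightarrow> (nat \<Rightarrow> 'a \<Rightarrow> 'b::euclidean_space) \<Rightarrow> ('a \<Rightarrow> 'b) \<Rightarrow> bool" where
  "conv_weak_measure \<pi> Xs X \<longleftrightarrow>
     (\<forall>\<epsilon>>0. (\<lambda>n. Poss \<pi> {\<omega>. norm (Xs n \<omega> - X \<omega>) \<le> \<epsilon>}) \<longlonglongrightarrow> 1)"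

definition conv_distr :: "('a \<Rightarrow> real) \<Rightarrow> (nat \<Rightarrow> 'a \<Rightarrow> 'b::euclidean_space) \<Rightarrow> ('a \<Rightarrow> 'b) \<Rightarrow> bool" where
  "conv_distr \<pi> Xs X \<longleftrightarrow>
     (\<forall>\<alpha>\<in>{0<..1}. (\<lambda>n. hausdist (acut (memb \<pi> (Xs n)) \<alpha>) (acut (memb \<pi> X) \<alpha>)) \<longlonglongrightarrow> 0)"

end

theory Submission
  imports Defs
begin

text \<open>
  Part (a) is proved pointwise.  The possibility of a set is the supremum of \<pi> on it,
  so a set of possibility below \<pi> w cannot contain w, and a set of possibility 1
  contains points of degree arbitrarily close to 1.  Convergence in measure thus
  forces pointwise convergence at every w with \<pi> w > 0; almost sure convergence
  forces it at a point of degree 1; and weak almost sure convergence supplies points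
  of degree close to 1 which eventually lie in every set {|X n - X| \<le> \<epsilon>}.

  Part (b) rests on two facts.  The Hausdorff distance from a nonempty bounded set A
  to a point c is at most e iff A lies in the closed e-ball about c.  And the
  \<alpha>-cut of Y lies in the open e-ball about c when the tail set {|Y - c| \<ge> e} has
  possibility below \<alpha>, while conversely that containment bounds the possibility
  of the tail set by \<alpha>.
\<close>

context
  fixes \<pi> :: "'a \<Rightarrow> real"
  assumes fuzzy: "fuzzy_set \<pi>"
begin

lemma pi_bounds: "0 \<le> \<pi> w" "\<pi> w \<le> 1"
  using fuzzy unfolding fuzzy_set_def by auto

lemma pi_mode: obtains w where "\<pi> w = 1"
  using fuzzy unfolding fuzzy_set_def by auto

lemma Poss_upper: "w \<in> B \<Longrightarrow> \<pi> w \<le> Poss \<pi> B"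
  unfolding Poss_def using pi_bounds
  by (auto intro!: cSUP_upper bdd_aboveI[where M=1])

lemma Poss_least: "(\<And>w. w \<in> B \<Longrightarrow> \<pi> w \<le> e) \<Longrightarrow> 0 \<le> e \<Longrightarrow> Poss \<pi> B \<le> e"
  unfolding Poss_def by (auto intro!: cSUP_least)

lemma Poss_nonneg: "0 \<le> Poss \<pi> B"
proof (cases "B = {}")
  case False
  then obtain w where "w \<in> B" by auto
  then show ?thesis using Poss_upper[of w B] pi_bounds[of w] by linarith
qed (simp add: Poss_def)

lemma Poss_le_1: "Poss \<pi> B \<le> 1"
  by (rule Poss_least) (auto simp: pi_bounds)

lemma Poss_mono: "B \<subseteq> C \<Longrightarrow> Poss \<pi> B \<le> Poss \<pi> C"
  by (rule Poss_least) (auto intro: Poss_upper Poss_nonneg)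

lemma notin_if_Poss_less: "Poss \<pi> B < \<pi> w \<Longrightarrow> w \<notin> B"
  using Poss_upper by fastforce

lemma Poss_1_approx:
  assumes "Poss \<pi> B = 1" "l < 1"
  obtains w where "w \<in> B" "l < \<pi> w"
proof -
  have ne: "B \<noteq> {}" using assms(1) by (auto simp: Poss_def)
  have "bdd_above (\<pi> ` B)" using pi_bounds by (auto intro: bdd_aboveI[where M=1])
  moreover have "l < (SUP w\<in>B. \<pi> w)" using assms ne by (simp add: Poss_def)
  ultimately show ?thesis using less_cSUP_iff[OF ne] that by blast
qed

text \<open>The membership function of the constant variable c is the indicator of {c},
  so all its \<alpha>-cuts are {c}.\<close>
lemma acut_memb_const:
  assumes "\<alpha> \<in> {0<..1}"
  shows "acut (memb \<pi> (\<lambda>_. c)) \<alpha> = {c}"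
proof -
  have "Poss \<pi> UNIV = 1"
    using pi_mode Poss_upper[of _ UNIV] Poss_le_1[of UNIV] by (metis UNIV_I order_antisym)
  then have "memb \<pi> (\<lambda>_. c) y = (if y = c then 1 else 0)" for y
    by (simp add: memb_def Poss_def)
  then show ?thesis using assms by (auto simp: acut_def)
qed

text \<open>Part (a), first implication: convergence in measure gives pointwise convergence
  wherever \<pi> is positive, so the exceptional set has possibility 0.\<close>
lemma conv_measure_imp_as:
  fixes Xs :: "nat \<Rightarrow> 'a \<Rightarrow> 'b::euclidean_space"
  assumes "conv_measure \<pi> Xs X"
  shows "conv_as \<pi> Xs X"
proof -
  have converges: "(\<lambda>n. Xs n w) \<longlonglongrightarrow> X w" if "0 < \<pi> w" for w
  proof (rule tendstoI)
    fix e :: real assume "0 < e"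
    then have "(\<lambda>n. Poss \<pi> {\<omega>. e \<le> norm (Xs n \<omega> - X \<omega>)}) \<longlonglongrightarrow> 0"
      using assms by (simp add: conv_measure_def)
    then have "eventually (\<lambda>n. Poss \<pi> {\<omega>. e \<le> norm (Xs n \<omega> - X \<omega>)} < \<pi> w) sequentially"
      using that by (rule order_tendstoD)
    then show "eventually (\<lambda>n. dist (Xs n w) (X w) < e) sequentially"
      by eventually_elim (auto dest: notin_if_Poss_less simp: dist_norm)
  qed
  have "Poss \<pi> {\<omega>. \<not> (\<lambda>n. Xs n \<omega>) \<longlonglongrightarrow> X \<omega>} \<le> 0"
    by (rule Poss_least) (use converges not_less in blast, simp)
  then show ?thesis
    unfolding conv_as_def using Poss_nonneg by (intro order_antisym)
qed

text \<open>Part (a), second implication: a point of degree 1 lies outside the exceptional set.\<close>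
lemma conv_as_imp_weak_as:
  fixes Xs :: "nat \<Rightarrow> 'a \<Rightarrow> 'b::euclidean_space"
  assumes "conv_as \<pi> Xs X"
  shows "conv_weak_as \<pi> Xs X"
proof -
  obtain w where w: "\<pi> w = 1" by (rule pi_mode)
  have "Poss \<pi> {\<omega>. \<not> (\<lambda>n. Xs n \<omega>) \<longlonglongrightarrow> X \<omega>} < \<pi> w"
    using assms w by (simp add: conv_as_def)
  then have "w \<in> {\<omega>. (\<lambda>n. Xs n \<omega>) \<longlonglongrightarrow> X \<omega>}"
    by (auto dest: notin_if_Poss_less)
  then have "1 \<le> Poss \<pi> {\<omega>. (\<lambda>n. Xs n \<omega>) \<longlonglongrightarrow> X \<omega>}"
    unfolding w[symmetric] by (rule Poss_upper)
  then show ?thesis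
    unfolding conv_weak_as_def using Poss_le_1 by (intro order_antisym)
qed

text \<open>Part (a), third implication: the convergence set contains points of degree
  arbitrarily close to 1, and each of them eventually lies in {|Xs n - X| \<le> e}.\<close>
lemma conv_weak_as_imp_weak_measure:
  fixes Xs :: "nat \<Rightarrow> 'a \<Rightarrow> 'b::euclidean_space"
  assumes "conv_weak_as \<pi> Xs X"
  shows "conv_weak_measure \<pi> Xs X"
  unfolding conv_weak_measure_def
proof (intro allI impI order_tendstoI)
  fix e l :: real assume "0 < e" "l < 1"
  then obtain w where w: "(\<lambda>n. Xs n w) \<longlonglongrightarrow> X w" "l < \<pi> w"
    using assms Poss_1_approx unfolding conv_weak_as_def by blast
  have "eventually (\<lambda>n. dist (Xs n w) (X w) < e) sequentially"
    using w(1) \<open>0 < e\<close> by (rule tendstoD)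
  then show "eventually (\<lambda>n. l < Poss \<pi> {\<omega>. norm (Xs n \<omega> - X \<omega>) \<le> e}) sequentially"
  proof eventually_elim
    case (elim n)
    then have "\<pi> w \<le> Poss \<pi> {\<omega>. norm (Xs n \<omega> - X \<omega>) \<le> e}"
      by (intro Poss_upper) (simp add: dist_norm)
    then show ?case using w(2) by linarith
  qed
next
  fix e u :: real assume "1 < u"
  then show "eventually (\<lambda>n. Poss \<pi> {\<omega>. norm (Xs n \<omega> - X \<omega>) \<le> e} < u) sequentially"
    by (intro always_eventually allI) (meson Poss_le_1 le_less_trans)
qed

lemma acut_subset_ball:
  assumes "Poss \<pi> {\<omega>. e \<le> norm (Y \<omega> - c)} < \<alpha>"
  shows "acut (memb \<pi> Y) \<alpha> \<subseteq> ball c e"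
proof
  fix y assume y: "y \<in> acut (memb \<pi> Y) \<alpha>"
  show "y \<in> ball c e"
  proof (rule ccontr)
    assume "y \<notin> ball c e"
    then have "Y -` {y} \<subseteq> {\<omega>. e \<le> norm (Y \<omega> - c)}"
      by (auto simp: dist_norm norm_minus_commute)
    then have "memb \<pi> Y y \<le> Poss \<pi> {\<omega>. e \<le> norm (Y \<omega> - c)}"
      unfolding memb_def by (rule Poss_mono)
    then show False using y assms by (simp add: acut_def)
  qed
qed

lemma Poss_tail_le_if_acut_subset:
  assumes "acut (memb \<pi> Y) \<alpha> \<subseteq> ball c e" "0 \<le> \<alpha>"
  shows "Poss \<pi> {\<omega>. e \<le> norm (Y \<omega> - c)} \<le> \<alpha>"
proof (rule Poss_least)
  fix w assume w: "w \<in> {\<omega>. e \<le> norm (Y \<omega> - c)}"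
  have "\<pi> w \<le> memb \<pi> Y (Y w)"
    unfolding memb_def by (rule Poss_upper) simp
  moreover have "Y w \<notin> acut (memb \<pi> Y) \<alpha>"
    using w assms(1) by (auto simp: dist_norm norm_minus_commute)
  ultimately show "\<pi> w \<le> \<alpha>" by (simp add: acut_def)
qed (rule assms(2))

end

lemma hausdist_singleton_le_iff:
  fixes A :: "'b::metric_space set"
  assumes "A \<noteq> {}" "bounded A"
  shows "hausdist A {c} \<le> e \<longleftrightarrow> A \<subseteq> cball c e"
proof -
  obtain M where "\<forall>y\<in>A. dist c y \<le> M" using assms(2) bounded_any_center by metis
  then have bdd: "bdd_above ((\<lambda>y. infdist y {c}) ` A)"
    by (auto intro!: bdd_aboveI2 simp: dist_commute)
  have point_to_set: "infdist c A \<le> e" if "A \<subseteq> cball c e"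
  proof -
    obtain a where "a \<in> A" using assms(1) by auto
    then have "infdist c A \<le> dist c a" by (rule infdist_le)
    also have "\<dots> \<le> e" using \<open>a \<in> A\<close> that by auto
    finally show ?thesis .
  qed
  have "(SUP y\<in>A. infdist y {c}) \<le> e \<longleftrightarrow> (\<forall>y\<in>A. dist y c \<le> e)"
    using cSUP_le_iff[OF assms(1) bdd] by simp
  then show ?thesis
    unfolding hausdist_def using point_to_set by (auto simp: dist_commute)
qed

lemma hausdist_singleton_nonneg:
  fixes A :: "'b::metric_space set"
  shows "0 \<le> hausdist A {c}"
  unfolding hausdist_def using infdist_nonneg[of c A] by simp

context
  fixes \<pi> :: "'a \<Rightarrow> real" and Xs :: "nat \<Rightarrow> 'a \<Rightarrow> 'b::euclidean_space" and c :: 'b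
  assumes fuzzy: "fuzzy_set \<pi>"
    and compact_cuts: "\<And>n. compact_fuzzy_var \<pi> (Xs n)"
begin

lemma hausdist_cut_le_iff:
  "\<alpha> \<in> {0<..1} \<Longrightarrow>
     hausdist (acut (memb \<pi> (Xs n)) \<alpha>) {c} \<le> e \<longleftrightarrow> acut (memb \<pi> (Xs n)) \<alpha> \<subseteq> cball c e"
  using compact_cuts[of n]
  by (intro hausdist_singleton_le_iff) (auto simp: compact_fuzzy_var_def compact_imp_bounded)

text \<open>Part (b), convergence in distribution to a constant implies convergence in measure:
  for a tolerance r choose a level \<alpha> < r; once the \<alpha>-cuts lie within e/2 of c, the
  tail sets have possibility at most \<alpha>.\<close>
lemma conv_distr_const_imp_measure:
  assumes "conv_distr \<pi> Xs (\<lambda>_. c)"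
  shows "conv_measure \<pi> Xs (\<lambda>_. c)"
  unfolding conv_measure_def
proof (intro allI impI)
  fix e :: real assume "0 < e"
  show "(\<lambda>n. Poss \<pi> {\<omega>. e \<le> norm (Xs n \<omega> - c)}) \<longlonglongrightarrow> 0"
  proof (rule order_tendstoI)
    fix l :: real assume "l < 0"
    then show "eventually (\<lambda>n. l < Poss \<pi> {\<omega>. e \<le> norm (Xs n \<omega> - c)}) sequentially"
      by (intro always_eventually allI) (meson Poss_nonneg[OF fuzzy] less_le_trans)
  next
    fix r :: real assume "0 < r"
    define \<alpha> where "\<alpha> = min (r/2) 1"
    have \<alpha>: "\<alpha> \<in> {0<..1}" "\<alpha> < r" using \<open>0 < r\<close> by (auto simp: \<alpha>_def)
    have "(\<lambda>n. hausdist (acut (memb \<pi> (Xs n)) \<alpha>) {c}) \<longlonglongrightarrow> 0"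
      using assms \<alpha>(1) acut_memb_const[OF fuzzy \<alpha>(1)] unfolding conv_distr_def by metis
    then have "eventually (\<lambda>n. hausdist (acut (memb \<pi> (Xs n)) \<alpha>) {c} < e/2) sequentially"
      using half_gt_zero[OF \<open>0 < e\<close>] by (rule order_tendstoD)
    then show "eventually (\<lambda>n. Poss \<pi> {\<omega>. e \<le> norm (Xs n \<omega> - c)} < r) sequentially"
    proof eventually_elim
      case (elim n)
      then have "acut (memb \<pi> (Xs n)) \<alpha> \<subseteq> cball c (e/2)"
        using hausdist_cut_le_iff[OF \<alpha>(1)] by (meson less_imp_le)
      also have "\<dots> \<subseteq> ball c e" using \<open>0 < e\<close> by auto
      finally have "Poss \<pi> {\<omega>. e \<le> norm (Xs n \<omega> - c)} \<le> \<alpha>"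
        using \<alpha>(1) by (intro Poss_tail_le_if_acut_subset[OF fuzzy]) auto
      then show ?case using \<alpha>(2) by linarith
    qed
  qed
qed

text \<open>Part (b), convergence in measure to a constant implies convergence in distribution:
  once the tail set {|Xs n - c| \<ge> r/2} has possibility below \<alpha>, the \<alpha>-cut of Xs n lies
  within r/2 of c.\<close>
lemma conv_measure_const_imp_distr:
  assumes "conv_measure \<pi> Xs (\<lambda>_. c)"
  shows "conv_distr \<pi> Xs (\<lambda>_. c)"
  unfolding conv_distr_def
proof
  fix \<alpha> :: real assume \<alpha>: "\<alpha> \<in> {0<..1}"
  show "(\<lambda>n. hausdist (acut (memb \<pi> (Xs n)) \<alpha>) (acut (memb \<pi> (\<lambda>_. c)) \<alpha>)) \<longlonglongrightarrow> 0"
    unfolding acut_memb_const[OF fuzzy \<alpha>]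
  proof (rule order_tendstoI)
    fix l :: real assume "l < 0"
    then show "eventually (\<lambda>n. l < hausdist (acut (memb \<pi> (Xs n)) \<alpha>) {c}) sequentially"
      by (intro always_eventually allI) (meson hausdist_singleton_nonneg less_le_trans)
  next
    fix r :: real assume "0 < r"
    then have "(\<lambda>n. Poss \<pi> {\<omega>. r/2 \<le> norm (Xs n \<omega> - c)}) \<longlonglongrightarrow> 0"
      using assms unfolding conv_measure_def by (meson half_gt_zero)
    then have "eventually (\<lambda>n. Poss \<pi> {\<omega>. r/2 \<le> norm (Xs n \<omega> - c)} < \<alpha>) sequentially"
      using \<alpha> by (auto intro: order_tendstoD)
    then show "eventually (\<lambda>n. hausdist (acut (memb \<pi> (Xs n)) \<alpha>) {c} < r) sequentially"
    proof eventually_elim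
      case (elim n)
      then have "acut (memb \<pi> (Xs n)) \<alpha> \<subseteq> cball c (r/2)"
        using acut_subset_ball[OF fuzzy] by fastforce
      then have "hausdist (acut (memb \<pi> (Xs n)) \<alpha>) {c} \<le> r/2"
        using hausdist_cut_le_iff[OF \<alpha>] by blast
      then show ?case using \<open>0 < r\<close> by linarith
    qed
  qed
qed

end

theorem mainTheorem2:
  fixes \<pi> :: "'a \<Rightarrow> real"
    and Xs :: "nat \<Rightarrow> 'a \<Rightarrow> 'b::euclidean_space"
    and X :: "'a \<Rightarrow> 'b"
  assumes "fuzzy_set \<pi>"
  shows "(conv_measure \<pi> Xs X \<longrightarrow> conv_as \<pi> Xs X)
       \<and> (conv_as \<pi> Xs X \<longrightarrow> conv_weak_as \<pi> Xs X)
       \<and> (conv_weak_as \<pi> Xs X \<longrightarrow> conv_weak_measure \<pi> Xs X)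
       \<and> (\<forall>c. (\<forall>n. compact_fuzzy_var \<pi> (Xs n)) \<and> X = (\<lambda>_. c)
              \<longrightarrow> (conv_distr \<pi> Xs X \<longleftrightarrow> conv_measure \<pi> Xs X))"
proof (intro conjI allI impI)
  show "conv_measure \<pi> Xs X \<Longrightarrow> conv_as \<pi> Xs X"
    by (rule conv_measure_imp_as[OF assms])
  show "conv_as \<pi> Xs X \<Longrightarrow> conv_weak_as \<pi> Xs X"
    by (rule conv_as_imp_weak_as[OF assms])
  show "conv_weak_as \<pi> Xs X \<Longrightarrow> conv_weak_measure \<pi> Xs X"
    by (rule conv_weak_as_imp_weak_measure[OF assms])
  fix c assume "(\<forall>n. compact_fuzzy_var \<pi> (Xs n)) \<and> X = (\<lambda>_. c)"
  then show "conv_distr \<pi> Xs X \<longleftrightarrow> conv_measure \<pi> Xs X"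
    using conv_distr_const_imp_measure[OF assms] conv_measure_const_imp_distr[OF assms]
    by blast
qed

end
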